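(* If $G$ is a finite simple graph of order $n$ with at least one edge such that $G[\mathrm{core}(G)]$ is Class 1, then $\mathrm{es}_{\Delta}(G)\leq \frac{n}{2}$. In particular, if $G$ is a Class 1 graph, then $\mathrm{es}_{\Delta}(G)\leq\frac{n}{2}$.
   Context: $\mathrm{core}(G)$ is the set of vertices of $G$ of maximum degree $\Delta(G)$. A graph $H$ is Class 1 if its chromatic index equals its maximum degree; in the first statement this is interpreted as $G[\mathrm{core}(G)]$ having a proper $\Delta(G)$-edge coloring. $\mathrm{es}_{\Delta}(G)$ is the minimum number of edges of $G$ whose removal results in a subgraph with maximum degree $\Delta(G)-1$. *)

theory Defs
  imports Main
begin

definition simple_graph :: "'a set \<Rightarrow> 'a set set \<Rightarrow> bool" where
  "simple_graph V E \<longleftrightarrow> finite V \<and> (\<forall>e\<in>E. e \<subseteq> V \<and> card e = 2)"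

definition degree :: "'a set set \<Rightarrow> 'a \<Rightarrow> nat" where
  "degree E v = card {e\<in>E. v \<in> e}"

definition max_degree :: "'a set \<Rightarrow> 'a set set \<Rightarrow> nat" where
  "max_degree V E = Max (degree E ` V)"

definition core :: "'a set \<Rightarrow> 'a set set \<Rightarrow> 'a set" where
  "core V E = {v\<in>V. degree E v = max_degree V E}"

definition induced_edges :: "'a set set \<Rightarrow> 'a set \<Rightarrow> 'a set set" where
  "induced_edges E S = {e\<in>E. e \<subseteq> S}"

definition proper_edge_colouring :: "'a set set \<Rightarrow> nat \<Rightarrow> ('a set \<Rightarrow> nat) \<Rightarrow> bool" where
  "proper_edge_colouring F k c \<longleftrightarrow>
     (\<forall>e\<in>F. c e < k) \<and>
     (\<forall>e\<in>F. \<forall>e'\<in>F. e \<noteq> e' \<and> e \<inter> e' \<noteq> {} \<longrightarrow> c e \<noteq> c e')"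

definition edge_colourable :: "'a set set \<Rightarrow> nat \<Rightarrow> bool" where
  "edge_colourable F k \<longleftrightarrow> (\<exists>c. proper_edge_colouring F k c)"

definition chromatic_index :: "'a set set \<Rightarrow> nat" where
  "chromatic_index F = (LEAST k. edge_colourable F k)"

definition class1 :: "'a set \<Rightarrow> 'a set set \<Rightarrow> bool" where
  "class1 V E \<longleftrightarrow> chromatic_index E = max_degree V E"

definition es_delta :: "'a set \<Rightarrow> 'a set set \<Rightarrow> nat" where
  "es_delta V E = Min {card F | F. F \<subseteq> E \<and> max_degree V (E - F) = max_degree V E - 1}"

end

theory Submission
  imports Defs
begin

text \<open>Let D be the maximum degree, K the core and c a proper D-edge-colouring of G[K].
  A core vertex misses exactly as many colours as it has edges leaving K, so the number of
  pairs (core vertex, colour it misses) is at most the degree sum over V - K, which is at most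
  D |V - K|; so some colour j is missed by at most |V - K| core vertices.  The colour
  class of j is a matching M inside K; adding one edge leaving K at each core vertex missed
  by j gives an edge set F meeting every core vertex exactly once, with
  2 |F| \<le> 2 |M| + 2 |K - \<Union>M| \<le> |K| + |V - K| = |V|.  Deleting F lowers every core degree to
  D - 1 and leaves all other degrees below D.\<close>

lemma simple_graph_finite_edges:
  assumes "simple_graph V E"
  shows "finite E"
proof -
  have "E \<subseteq> Pow V" and "finite V"
    using assms by (auto simp: simple_graph_def)
  then show ?thesis
    by (metis finite_Pow_iff finite_subset)
qed

lemma simple_graph_vertices_nonempty:
  assumes "simple_graph V E" and "E \<noteq> {}"
  shows "V \<noteq> {}"
proof -
  obtain e where "e \<in> E"
    using assms(2) by blast
  then have "e \<subseteq> V" and "e \<noteq> {}"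
    using assms(1) by (auto simp: simple_graph_def)
  then show ?thesis
    by blast
qed

lemma degree_mono:
  assumes "finite E" and "F \<subseteq> E"
  shows "degree F v \<le> degree E v"
  unfolding degree_def using assms by (intro card_mono) auto

lemma degree_Diff:
  assumes "finite E" and "F \<subseteq> E"
  shows "degree (E - F) v = degree E v - degree F v"
proof -
  have "{e \<in> E - F. v \<in> e} = {e \<in> E. v \<in> e} - {e \<in> F. v \<in> e}"
    by blast
  moreover have "{e \<in> F. v \<in> e} \<subseteq> {e \<in> E. v \<in> e}"
    using assms(2) by blast
  ultimately show ?thesis
    unfolding degree_def using assms(1) by (simp add: card_Diff_subset finite_subset)
qed

lemma degree_le_max_degree:
  "finite V \<Longrightarrow> v \<in> V \<Longrightarrow> degree E v \<le> max_degree V E"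
  by (simp add: max_degree_def)

lemma max_degree_attained:
  assumes "finite V" and "V \<noteq> {}"
  obtains v where "v \<in> V" and "degree E v = max_degree V E"
  using Max_in[of "degree E ` V"] assms unfolding max_degree_def by (metis finite_imageI image_is_empty imageE)

lemma max_degree_eqI:
  assumes "finite V" and "\<And>v. v \<in> V \<Longrightarrow> degree E v \<le> d" and "v \<in> V" and "degree E v = d"
  shows "max_degree V E = d"
  unfolding max_degree_def using assms by (intro Max_eqI) auto

lemma max_degree_pos:
  assumes "simple_graph V E" and "E \<noteq> {}"
  shows "0 < max_degree V E"
proof -
  obtain e where e: "e \<in> E"
    using assms(2) by blast
  then have "e \<subseteq> V" and "e \<noteq> {}" and "finite V"
    using assms(1) by (auto simp: simple_graph_def)
  then obtain u where "u \<in> e" and "u \<in> V"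
    by blast
  then have "0 < degree E u"
    using e simple_graph_finite_edges[OF assms(1)] by (auto simp: degree_def card_gt_0_iff)
  then show ?thesis
    using degree_le_max_degree[OF \<open>finite V\<close> \<open>u \<in> V\<close>, where E = E] by linarith
qed

lemma card_2_Int_eq_singleton:
  assumes "card e = 2" and "u \<in> e" and "u \<in> K" and "\<not> e \<subseteq> K"
  shows "e \<inter> K = {u}"
  using assms by (auto simp: card_2_iff)

lemma card_2_card_Int_le_card_Diff:
  assumes "card e = 2" and "\<not> e \<subseteq> K"
  shows "card (e \<inter> K) \<le> card (e - K)"
proof (cases "e \<inter> K = {}")
  case False
  then obtain u where "e \<inter> K = {u}"
    using card_2_Int_eq_singleton[OF assms(1) _ _ assms(2)] by blast
  moreover have "e - K \<noteq> {}" and "finite e"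
    using assms by (auto simp: card_2_iff)
  ultimately show ?thesis
    by (simp add: Suc_le_eq card_gt_0_iff)
qed simp

lemma sum_degree_leaving_edges_le:
  assumes G: "simple_graph V E" and "K \<subseteq> V"
  shows "(\<Sum>v\<in>K. degree {e\<in>E. \<not> e \<subseteq> K} v) \<le> (\<Sum>w\<in>V - K. degree E w)"
proof -
  let ?C = "{e\<in>E. \<not> e \<subseteq> K}"
  have fin: "finite V" "finite E" "finite K"
    using G assms(2) simple_graph_finite_edges by (auto simp: simple_graph_def finite_subset)
  have "(\<Sum>v\<in>K. degree ?C v) = (\<Sum>e\<in>?C. card (e \<inter> K))"
    unfolding degree_def using fin by (intro sum_multicount_gen) (auto simp: Int_def conj_commute)
  also have "\<dots> \<le> (\<Sum>e\<in>?C. card (e - K))"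
    using G by (intro sum_mono card_2_card_Int_le_card_Diff) (auto simp: simple_graph_def)
  also have "\<dots> = (\<Sum>w\<in>V - K. degree ?C w)"
  proof -
    have "{w \<in> V - K. w \<in> e} = e - K" if "e \<in> ?C" for e
      using that G by (auto simp: simple_graph_def)
    then show ?thesis
      unfolding degree_def using fin by (intro sum_multicount_gen[symmetric]) auto
  qed
  also have "\<dots> \<le> (\<Sum>w\<in>V - K. degree E w)"
    using fin by (intro sum_mono degree_mono) auto
  finally show ?thesis .
qed

lemma ex_le_of_sum_le_card_mult:
  fixes f :: "'b \<Rightarrow> nat"
  assumes "finite A" and "A \<noteq> {}" and "sum f A \<le> card A * n"
  shows "\<exists>a\<in>A. f a \<le> n"
proof (rule ccontr)
  assume "\<not> (\<exists>a\<in>A. f a \<le> n)"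
  then have "card A * Suc n \<le> sum f A"
    using sum_bounded_below[of A "Suc n" f] by (auto simp: not_le Suc_le_eq)
  moreover have "0 < card A"
    using assms(1,2) by (simp add: card_gt_0_iff)
  ultimately show False
    using assms(3) by simp
qed

definition missing_colours :: "'a set set \<Rightarrow> nat \<Rightarrow> ('a set \<Rightarrow> nat) \<Rightarrow> 'a \<Rightarrow> nat set" where
  "missing_colours F k c v = {..<k} - c ` {e\<in>F. v \<in> e}"

lemma proper_edge_colouring_subset:
  "proper_edge_colouring F k c \<Longrightarrow> F' \<subseteq> F \<Longrightarrow> proper_edge_colouring F' k c"
  unfolding proper_edge_colouring_def by blast

lemma edge_colourable_subset:
  "edge_colourable F k \<Longrightarrow> F' \<subseteq> F \<Longrightarrow> edge_colourable F' k"
  unfolding edge_colourable_def using proper_edge_colouring_subset by blast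

lemma proper_edge_colouring_inj_on_star:
  assumes "proper_edge_colouring F k c"
  shows "inj_on c {e\<in>F. v \<in> e}"
proof (rule inj_onI, rule ccontr)
  fix e e' assume "e \<in> {e\<in>F. v \<in> e}" "e' \<in> {e\<in>F. v \<in> e}" "c e = c e'" "e \<noteq> e'"
  then show False
    using assms unfolding proper_edge_colouring_def by blast
qed

lemma colour_class_pairwise_disjnt:
  assumes "proper_edge_colouring F k c"
  shows "pairwise disjnt {e\<in>F. c e = j}"
  using assms unfolding proper_edge_colouring_def pairwise_def disjnt_def by blast

lemma card_missing_colours:
  assumes "proper_edge_colouring F k c" and "finite F"
  shows "card (missing_colours F k c v) = k - degree F v"
proof -
  have "c ` {e\<in>F. v \<in> e} \<subseteq> {..<k}"
    using assms(1) by (auto simp: proper_edge_colouring_def)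
  moreover have "card (c ` {e\<in>F. v \<in> e}) = degree F v"
    unfolding degree_def using proper_edge_colouring_inj_on_star[OF assms(1)] by (rule card_image)
  ultimately show ?thesis
    unfolding missing_colours_def by (simp add: card_Diff_subset finite_subset)
qed

lemma missing_colours_iff:
  "j \<in> missing_colours F k c v \<longleftrightarrow> j < k \<and> v \<notin> \<Union>{e\<in>F. c e = j}"
  unfolding missing_colours_def by auto

lemma edge_colourable_card:
  assumes "finite F"
  shows "edge_colourable F (card F)"
proof -
  obtain h where "bij_betw h F {0..<card F}"
    using ex_bij_betw_finite_nat[OF assms] by blast
  then have "proper_edge_colouring F (card F) h"
    unfolding proper_edge_colouring_def bij_betw_def inj_on_def by auto
  then show ?thesis
    unfolding edge_colourable_def by blast
qed

lemma class1_edge_colourable: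
  assumes "finite E" and "class1 V E"
  shows "edge_colourable E (max_degree V E)"
proof -
  have "edge_colourable E (chromatic_index E)"
    unfolding chromatic_index_def using edge_colourable_card[OF assms(1)] by (rule LeastI)
  then show ?thesis
    using assms(2) by (simp add: class1_def)
qed

lemma degree_matching_plus_leaving_edges:
  assumes G: "simple_graph V E"
    and M: "\<forall>e\<in>M. e \<subseteq> K" "pairwise disjnt M"
    and g: "\<forall>u\<in>K - \<Union>M. g u \<in> E \<and> u \<in> g u \<and> \<not> g u \<subseteq> K"
    and "v \<in> K"
  shows "degree (M \<union> g ` (K - \<Union>M)) v = 1"
proof -
  have g_meets_K: "g u \<inter> K = {u}" if "u \<in> K - \<Union>M" for u
    using that g G by (intro card_2_Int_eq_singleton) (auto simp: simple_graph_def)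
  show ?thesis
  proof (cases "v \<in> \<Union>M")
    case True
    then obtain e0 where e0: "e0 \<in> M" "v \<in> e0"
      by blast
    have "e = e0" if "e \<in> M" "v \<in> e" for e
      using M(2) that e0 unfolding pairwise_def disjnt_def by blast
    moreover have "v \<notin> g u" if "u \<in> K - \<Union>M" for u
      using g_meets_K[OF that] that True \<open>v \<in> K\<close> by auto
    ultimately have "{e \<in> M \<union> g ` (K - \<Union>M). v \<in> e} = {e0}"
      using e0 by blast
    then show ?thesis
      by (simp add: degree_def)
  next
    case False
    have "u = v" if "u \<in> K - \<Union>M" "v \<in> g u" for u
      using g_meets_K[OF that(1)] that(2) \<open>v \<in> K\<close> by auto
    moreover have "e \<notin> M" if "v \<in> e" for e
      using False that by blast
    ultimately have "{e \<in> M \<union> g ` (K - \<Union>M). v \<in> e} = {g v}"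
      using False g \<open>v \<in> K\<close> by blast
    then show ?thesis
      by (simp add: degree_def)
  qed
qed

lemma card_matching_plus_leaving_edges:
  assumes G: "simple_graph V E" and "K \<subseteq> V"
    and M: "M \<subseteq> E" "\<forall>e\<in>M. e \<subseteq> K" "pairwise disjnt M"
    and small: "card (K - \<Union>M) \<le> card (V - K)"
  shows "2 * card (M \<union> g ` (K - \<Union>M)) \<le> card V"
proof -
  have UM_sub: "\<Union>M \<subseteq> K"
    using M(2) by blast
  have "finite V"
    using G by (simp add: simple_graph_def)
  then have fin: "finite V" "finite K" "finite M" "finite (\<Union>M)"
    using finite_subset[OF assms(2)] finite_subset[OF M(1) simple_graph_finite_edges[OF G]]
      finite_subset[OF UM_sub]
    by auto
  have "card (\<Union>M) = (\<Sum>e\<in>M. card e)"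
    using card_Union_disjoint[OF M(3)] fin(2) UM_sub by (meson Sup_le_iff finite_subset)
  also have "\<dots> = (\<Sum>e\<in>M. 2)"
    using M(1) G by (intro sum.cong) (auto simp: simple_graph_def)
  finally have "card (\<Union>M) = 2 * card M"
    by simp
  moreover have "card (\<Union>M) + card (K - \<Union>M) = card K"
    using fin UM_sub by (simp add: card_Diff_subset card_mono)
  moreover have "card K + card (V - K) = card V"
    using fin assms(2) by (simp add: card_Diff_subset card_mono)
  moreover have "card (M \<union> g ` (K - \<Union>M)) \<le> card M + card (K - \<Union>M)"
    using card_Un_le[of M "g ` (K - \<Union>M)"] card_image_le[of "K - \<Union>M" g] fin(2)
    by simp
  ultimately show ?thesis
    using small by linarith
qed

lemma matching_extends_to_core_cover:
  assumes G: "simple_graph V E" and "K \<subseteq> V"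
    and M: "M \<subseteq> E" "\<forall>e\<in>M. e \<subseteq> K" "pairwise disjnt M"
    and leaving: "\<forall>u\<in>K - \<Union>M. \<exists>e\<in>E. u \<in> e \<and> \<not> e \<subseteq> K"
    and small: "card (K - \<Union>M) \<le> card (V - K)"
  shows "\<exists>F\<subseteq>E. (\<forall>v\<in>K. degree F v = 1) \<and> 2 * card F \<le> card V"
proof -
  obtain g where g: "\<forall>u\<in>K - \<Union>M. g u \<in> E \<and> u \<in> g u \<and> \<not> g u \<subseteq> K"
    using leaving by metis
  show ?thesis
  proof (intro exI conjI ballI)
    show "M \<union> g ` (K - \<Union>M) \<subseteq> E"
      using M(1) g by blast
    show "degree (M \<union> g ` (K - \<Union>M)) v = 1" if "v \<in> K" for v
      using degree_matching_plus_leaving_edges[OF G M(2,3) g that] .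
    show "2 * card (M \<union> g ` (K - \<Union>M)) \<le> card V"
      using card_matching_plus_leaving_edges[OF G assms(2) M small] .
  qed
qed

lemma card_missing_colours_core:
  assumes G: "simple_graph V E"
    and c: "proper_edge_colouring (induced_edges E (core V E)) (max_degree V E) c"
    and "v \<in> core V E"
  shows "card (missing_colours (induced_edges E (core V E)) (max_degree V E) c v)
           = degree {e\<in>E. \<not> e \<subseteq> core V E} v"
proof -
  let ?H = "induced_edges E (core V E)"
  have finE: "finite E"
    using simple_graph_finite_edges[OF G] .
  have "?H \<subseteq> E" and "{e\<in>E. \<not> e \<subseteq> core V E} = E - ?H"
    by (auto simp: induced_edges_def)
  moreover have "degree E v = max_degree V E"
    using assms(3) by (simp add: core_def)
  ultimately show ?thesis
    using card_missing_colours[OF c finite_subset[OF _ finE]] degree_Diff[OF finE] by simp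
qed

lemma ex_colour_missing_few_core_vertices:
  assumes G: "simple_graph V E" and "E \<noteq> {}"
    and c: "proper_edge_colouring (induced_edges E (core V E)) (max_degree V E) c"
  shows "\<exists>j < max_degree V E.
           card (core V E - \<Union>{e\<in>induced_edges E (core V E). c e = j}) \<le> card (V - core V E)"
proof -
  define D K where "D = max_degree V E" and "K = core V E"
  define colour_class where "colour_class j = {e\<in>induced_edges E K. c e = j}" for j
  have finV: "finite V" and KV: "K \<subseteq> V"
    using G by (auto simp: simple_graph_def K_def core_def)
  have "(\<Sum>j<D. card (K - \<Union>(colour_class j)))
          = (\<Sum>v\<in>K. card (missing_colours (induced_edges E K) D c v))"
  proof -
    have "K - \<Union>(colour_class j) = {v\<in>K. v \<notin> \<Union>(colour_class j)}" for j
      by blast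
    moreover have "missing_colours (induced_edges E K) D c v
                     = {j\<in>{..<D}. v \<notin> \<Union>(colour_class j)}" for v
      by (auto simp: missing_colours_iff colour_class_def)
    ultimately show ?thesis
      using finV KV by (simp add: sum_multicount_gen finite_subset)
  qed
  also have "\<dots> = (\<Sum>v\<in>K. degree {e\<in>E. \<not> e \<subseteq> K} v)"
    using card_missing_colours_core[OF G c] by (simp add: K_def D_def)
  also have "\<dots> \<le> (\<Sum>w\<in>V - K. degree E w)"
    using sum_degree_leaving_edges_le[OF G KV] .
  also have "\<dots> \<le> card {..<D} * card (V - K)"
    using sum_mono[of "V - K" "degree E" "\<lambda>_. D"] degree_le_max_degree[OF finV]
    by (simp add: D_def mult.commute)
  finally show ?thesis
    using ex_le_of_sum_le_card_mult[of "{..<D}"] max_degree_pos[OF assms(1,2)]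
    by (auto simp: D_def K_def colour_class_def)
qed

lemma core_cover_from_colouring:
  assumes G: "simple_graph V E" and "E \<noteq> {}"
    and c: "proper_edge_colouring (induced_edges E (core V E)) (max_degree V E) c"
  shows "\<exists>F\<subseteq>E. (\<forall>v\<in>core V E. degree F v = 1) \<and> 2 * card F \<le> card V"
proof -
  define K where "K = core V E"
  obtain j where "j < max_degree V E"
    and small: "card (K - \<Union>{e\<in>induced_edges E K. c e = j}) \<le> card (V - K)"
    using ex_colour_missing_few_core_vertices[OF assms] by (auto simp: K_def)
  have leaving: "\<forall>u\<in>K - \<Union>{e\<in>induced_edges E K. c e = j}. \<exists>e\<in>E. u \<in> e \<and> \<not> e \<subseteq> K"
  proof
    fix u assume u: "u \<in> K - \<Union>{e\<in>induced_edges E K. c e = j}"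
    then have "j \<in> missing_colours (induced_edges E K) (max_degree V E) c u"
      using \<open>j < max_degree V E\<close> by (simp add: missing_colours_iff)
    then have "0 < card (missing_colours (induced_edges E K) (max_degree V E) c u)"
      by (auto simp: card_gt_0_iff missing_colours_def)
    then have "0 < degree {e\<in>E. \<not> e \<subseteq> K} u"
      using card_missing_colours_core[OF G c, of u] u by (simp add: K_def)
    then show "\<exists>e\<in>E. u \<in> e \<and> \<not> e \<subseteq> K"
      by (auto simp: degree_def card_gt_0_iff)
  qed
  have KV: "K \<subseteq> V"
    by (auto simp: K_def core_def)
  have matching: "{e\<in>induced_edges E K. c e = j} \<subseteq> E"
      "\<forall>e\<in>{e\<in>induced_edges E K. c e = j}. e \<subseteq> K"
      "pairwise disjnt {e\<in>induced_edges E K. c e = j}"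
    using colour_class_pairwise_disjnt[OF c] by (auto simp: K_def induced_edges_def)
  show ?thesis
    using matching_extends_to_core_cover[OF G KV matching leaving small] by (simp add: K_def)
qed

lemma es_delta_le_core_cover:
  assumes G: "simple_graph V E" and "V \<noteq> {}"
    and F: "F \<subseteq> E" "\<forall>v\<in>core V E. degree F v = 1"
  shows "es_delta V E \<le> card F"
proof -
  define D where "D = max_degree V E"
  have finV: "finite V" and finE: "finite E"
    using G simple_graph_finite_edges by (auto simp: simple_graph_def)
  obtain v0 where v0: "v0 \<in> V" "degree E v0 = D"
    using max_degree_attained[OF finV assms(2)] D_def by metis
  have core_degree: "degree (E - F) v = D - 1" if "v \<in> core V E" for v
    using that F degree_Diff[OF finE F(1)] by (simp add: core_def D_def)
  have other_degree: "degree (E - F) v \<le> D - 1" if "v \<in> V" "v \<notin> core V E" for v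
  proof -
    have "degree E v < D"
      using that degree_le_max_degree[OF finV that(1), where E = E] by (auto simp: core_def D_def)
    then show ?thesis
      using degree_mono[OF finE Diff_subset, of F v] by linarith
  qed
  have "max_degree V (E - F) = D - 1"
  proof (rule max_degree_eqI[OF finV _ v0(1)])
    show "degree (E - F) v \<le> D - 1" if "v \<in> V" for v
      using that core_degree other_degree by (cases "v \<in> core V E") auto
    show "degree (E - F) v0 = D - 1"
      using core_degree v0 by (simp add: core_def D_def)
  qed
  then have "card F \<in> {card F' | F'. F' \<subseteq> E \<and> max_degree V (E - F') = max_degree V E - 1}"
    using F(1) D_def by blast
  moreover have "finite {card F' | F'. F' \<subseteq> E \<and> max_degree V (E - F') = max_degree V E - 1}"
    using finE by (auto intro: finite_subset[of _ "card ` Pow E"])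
  ultimately show ?thesis
    unfolding es_delta_def by simp
qed

theorem corollary5p3:
  fixes V :: "'a set" and E :: "'a set set"
  assumes "simple_graph V E" and "E \<noteq> {}"
  shows "(edge_colourable (induced_edges E (core V E)) (max_degree V E)
            \<longrightarrow> 2 * es_delta V E \<le> card V)
       \<and> (class1 V E \<longrightarrow> 2 * es_delta V E \<le> card V)"
proof -
  have "2 * es_delta V E \<le> card V"
    if colourable: "edge_colourable (induced_edges E (core V E)) (max_degree V E)"
  proof -
    obtain c where "proper_edge_colouring (induced_edges E (core V E)) (max_degree V E) c"
      using colourable unfolding edge_colourable_def by blast
    then obtain F where F: "F \<subseteq> E" "\<forall>v\<in>core V E. degree F v = 1" and "2 * card F \<le> card V"
      using core_cover_from_colouring[OF assms] by blast
    moreover have "es_delta V E \<le> card F"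
      using es_delta_le_core_cover[OF assms(1) simple_graph_vertices_nonempty[OF assms] F] .
    ultimately show ?thesis
      by linarith
  qed
  moreover have "edge_colourable (induced_edges E (core V E)) (max_degree V E)" if "class1 V E"
    using class1_edge_colourable[OF simple_graph_finite_edges[OF assms(1)] that]
    by (rule edge_colourable_subset) (auto simp: induced_edges_def)
  ultimately show ?thesis
    by blast
qed

end
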